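(* Let $R$ be an affine algebra over a field $K$ with no zero divisors, and let $\overline{V}_1\subseteq V_1\subseteq\overline{V}_2\subseteq V_2\subseteq\cdots\subseteq R$ be finite-dimensional $K$-subspaces such that (a) for every $r\in R$, $\lim_{n}\dim_K(V_nr+V_n)/\dim_K(V_n)=1$; (b) $\lim_n\dim_K(\overline{V}_n)/\dim_K(V_n)=1$; (c) for every finite-dimensional subspace $Z\subseteq R$ there is $k$ with $\overline{V}_n+\overline{V}_nZ\subseteq V_n$ for all $n>k$. Let $\{e_i\}_{i\ge1}$ be a basis of $R$ such that for each $i$, if $\dim_K\overline{V}_i=k_i$ and $\dim_K V_i=l_i$, then $e_1,\dots,e_{k_i}$ is a basis of $\overline{V}_i$ and $e_1,\dots,e_{l_i}$ is a basis of $V_i$. For $0\neq s\in R$ and $k\ge1$ let $$F_k(s)=\{e_j\in V_k: e_js\notin V_k\},\qquad B_k(s)=\{e_j\notin V_k: e_js\in V_k\}.$$ Then $$\lim_{k\to\infty}\frac{|F_k(s)|}{\dim_K(V_k)}=0\quad\text{and}\quad\lim_{k\to\infty}\frac{|B_k(s)|}{\dim_K(V_k)}=0.$$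
   Context: An affine algebra is a finitely generated associative algebra over $K$, not necessarily unital. For subspaces $V,Z$, $VZ$ is the $K$-span of products $vz$. *)

theory Defs
  imports Complex_Main
begin

text \<open>A (not necessarily unital) associative K-algebra R: the carrier is a type 'r of class
  ring (associative, distributive, no unit required), with a K-vector-space structure given
  by a scalar multiplication sc, compatible with the ring multiplication.\<close>

definition is_K_algebra :: "('k::field \<Rightarrow> 'r::ring \<Rightarrow> 'r) \<Rightarrow> bool" where
  "is_K_algebra sc \<longleftrightarrow> vector_space sc \<and>
     (\<forall>a x y. sc a (x * y) = sc a x * y \<and> sc a (x * y) = x * sc a y)"

definition gen_subalgebra :: "('k::field \<Rightarrow> 'r::ring \<Rightarrow> 'r) \<Rightarrow> 'r set \<Rightarrow> 'r set" where
  "gen_subalgebra sc S = module.span sc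
     {foldr (*) xs x | x xs. x \<in> S \<and> set xs \<subseteq> S}"

definition affine_algebra :: "('k::field \<Rightarrow> 'r::ring \<Rightarrow> 'r) \<Rightarrow> bool" where
  "affine_algebra sc \<longleftrightarrow> is_K_algebra sc \<and>
     (\<exists>S. finite S \<and> gen_subalgebra sc S = UNIV)"

definition no_zero_divisors_ring :: "'r::ring itself \<Rightarrow> bool" where
  "no_zero_divisors_ring _ \<longleftrightarrow> (\<forall>x y::'r. x \<noteq> 0 \<longrightarrow> y \<noteq> 0 \<longrightarrow> x * y \<noteq> 0)"

definition fin_dim_subspace :: "('k::field \<Rightarrow> 'r::ring \<Rightarrow> 'r) \<Rightarrow> 'r set \<Rightarrow> bool" where
  "fin_dim_subspace sc V \<longleftrightarrow> module.subspace sc V \<and> (\<exists>B. finite B \<and> module.span sc B = V)"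

definition sub_prod :: "('k::field \<Rightarrow> 'r::ring \<Rightarrow> 'r) \<Rightarrow> 'r set \<Rightarrow> 'r set \<Rightarrow> 'r set" where
  "sub_prod sc V Z = module.span sc {v * z | v z. v \<in> V \<and> z \<in> Z}"

definition sub_sum :: "('k::field \<Rightarrow> 'r::ring \<Rightarrow> 'r) \<Rightarrow> 'r set \<Rightarrow> 'r set \<Rightarrow> 'r set" where
  "sub_sum sc V W = module.span sc (V \<union> W)"

definition Fset :: "(nat \<Rightarrow> 'r::ring) \<Rightarrow> 'r set \<Rightarrow> 'r \<Rightarrow> 'r set" where
  "Fset e Vk s = {x \<in> range e. x \<in> Vk \<and> x * s \<notin> Vk}"

definition Bset :: "(nat \<Rightarrow> 'r::ring) \<Rightarrow> 'r set \<Rightarrow> 'r \<Rightarrow> 'r set" where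
  "Bset e Vk s = {x \<in> range e. x \<notin> Vk \<and> x * s \<in> Vk}"

end

(*
  Condition (c) with Z = span {s} gives Vb_k s \<subseteq> V_k for all large k.  Then every e_j in
  F_k lies in V_k but not in Vb_k, so |F_k| + dim Vb_k \<le> dim V_k.  Right multiplication by s
  is linear and, as R has no zero divisors, injective; it maps the independent set
  {e_j | e_j \<in> Vb_k} \<union> B_k into V_k, so also |B_k| + dim Vb_k \<le> dim V_k.  By (b) the gap
  dim V_k - dim Vb_k is o(dim V_k).
*)
theory Submission
  imports Defs
begin

context vector_space
begin

lemma basis_prefix_mem_span_iff:
  assumes "inj e" and "independent (range e)" and "span (e ` {..<d}) = W"
  shows "e j \<in> W \<longleftrightarrow> j < d"
proof
  assume "j < d"
  then show "e j \<in> W"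
    using assms(3) span_base[of "e j" "e ` {..<d}"] by blast
next
  assume "e j \<in> W"
  show "j < d"
  proof (rule ccontr)
    assume "\<not> j < d"
    then have "e ` {..<d} \<subseteq> range e - {e j}"
      using \<open>inj e\<close> by (auto dest: injD)
    then have "e j \<in> span (range e - {e j})"
      using \<open>e j \<in> W\<close> assms(3) span_mono by blast
    then show False
      using assms(2) dependent_def by blast
  qed
qed

lemma injective_linear_image_span_bound:
  assumes "Vector_Spaces.linear scale scale f" and "inj f" and "independent A"
    and "f ` A \<subseteq> span T" and "finite T"
  shows "finite A \<and> card A \<le> card T"
proof -
  have "independent (f ` A)"
    using module_hom.independent_inj_image assms(1-3) linear_iff_module_hom by blast
  then have "finite (f ` A) \<and> card (f ` A) \<le> card T"
    using independent_span_bound assms(4,5) by blast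
  then show ?thesis
    using \<open>inj f\<close> by (simp add: card_image finite_image_iff inj_on_subset)
qed

end

lemma ratio_tendsto_zero_of_bounded_by_gap:
  fixes a b c :: "nat \<Rightarrow> nat"
  assumes ratio: "(\<lambda>n. real (a n) / real (b n)) \<longlonglongrightarrow> 1"
    and gap: "\<forall>\<^sub>F n in sequentially. c n + a n \<le> b n"
  shows "(\<lambda>n. real (c n) / real (b n)) \<longlonglongrightarrow> 0"
proof (rule tendsto_sandwich[OF _ _ tendsto_const])
  show "(\<lambda>n. 1 - real (a n) / real (b n)) \<longlonglongrightarrow> 0"
    using tendsto_diff[OF tendsto_const ratio, of 1] by simp
  show "\<forall>\<^sub>F n in sequentially. real (c n) / real (b n) \<le> 1 - real (a n) / real (b n)"
    using gap
  proof eventually_elim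
    case (elim n)
    then show ?case
      by (cases "b n = 0") (simp_all add: field_simps)
  qed
qed auto

lemma K_algebra_linear_mult_right:
  "is_K_algebra sc \<Longrightarrow> Vector_Spaces.linear sc sc (\<lambda>x. x * s)"
  unfolding is_K_algebra_def Vector_Spaces.linear_def module_hom_def module_hom_axioms_def
    module_iff_vector_space
  by (simp add: distrib_right)

lemma inj_mult_right_no_zero_divisors:
  fixes s :: "'r::ring"
  assumes "no_zero_divisors_ring TYPE('r)" and "s \<noteq> 0"
  shows "inj (\<lambda>x. x * s)"
proof (rule injI)
  fix x y :: 'r
  assume "x * s = y * s"
  then have "(x - y) * s = 0" by (simp add: left_diff_distrib)
  then show "x = y"
    using assms unfolding no_zero_divisors_ring_def by (metis right_minus_eq)
qed

lemma eventually_mult_right_mem: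
  fixes sc :: "'k::field \<Rightarrow> 'r::ring \<Rightarrow> 'r"
  assumes "vector_space sc"
    and "\<And>Z. fin_dim_subspace sc Z \<Longrightarrow> \<exists>k. \<forall>n>k. sub_sum sc (U n) (sub_prod sc (U n) Z) \<subseteq> W n"
  shows "\<forall>\<^sub>F n in sequentially. \<forall>x\<in>U n. x * s \<in> W n"
proof -
  interpret vector_space sc by fact
  have "fin_dim_subspace sc (span {s})"
    unfolding fin_dim_subspace_def using subspace_span by blast
  then obtain k where k: "\<And>n. n > k \<Longrightarrow> sub_sum sc (U n) (sub_prod sc (U n) (span {s})) \<subseteq> W n"
    using assms(2) by blast
  have mem: "x * s \<in> W n" if "n > k" and "x \<in> U n" for x n
  proof -
    have "x * s \<in> sub_prod sc (U n) (span {s})"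
      unfolding sub_prod_def using \<open>x \<in> U n\<close> span_base[of s "{s}"] by (intro span_base) blast
    then have "x * s \<in> sub_sum sc (U n) (sub_prod sc (U n) (span {s}))"
      unfolding sub_sum_def by (intro span_base) blast
    then show ?thesis using k \<open>n > k\<close> by blast
  qed
  show ?thesis
    using eventually_gt_at_top[of k] by eventually_elim (use mem in blast)
qed

lemma card_Fset_add_le:
  fixes sc :: "'k::field \<Rightarrow> 'r::ring \<Rightarrow> 'r"
  assumes "vector_space sc" and "inj e" and "\<not> module.dependent sc (range e)"
    and U: "module.span sc (e ` {..<d'}) = U" and W: "module.span sc (e ` {..<d}) = W"
    and "U \<subseteq> W" and mult: "\<forall>x\<in>U. x * s \<in> W"
  shows "card (Fset e W s) + d' \<le> d"
proof -
  interpret vector_space sc by fact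
  have memU: "e j \<in> U \<longleftrightarrow> j < d'" for j
    using basis_prefix_mem_span_iff[OF assms(2,3) U] .
  have memW: "e j \<in> W \<longleftrightarrow> j < d" for j
    using basis_prefix_mem_span_iff[OF assms(2,3) W] .
  have "d' \<le> d"
  proof (rule ccontr)
    assume "\<not> d' \<le> d"
    then have "e d \<in> W"
      using memU[of d] \<open>U \<subseteq> W\<close> by auto
    then show False
      using memW[of d] by simp
  qed
  have "Fset e W s \<subseteq> e ` {d'..<d}"
  proof
    fix x
    assume "x \<in> Fset e W s"
    then obtain j where x: "x = e j" and "e j \<in> W" and "e j * s \<notin> W"
      unfolding Fset_def by blast
    then have "j < d" and "\<not> j < d'"
      using memU[of j] memW[of j] mult by auto
    then show "x \<in> e ` {d'..<d}"
      using x by simp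
  qed
  then have "card (Fset e W s) \<le> card (e ` {d'..<d})"
    by (intro card_mono) auto
  also have "\<dots> \<le> d - d'"
    using card_image_le[of "{d'..<d}" e] by simp
  finally show ?thesis
    using \<open>d' \<le> d\<close> by simp
qed

lemma card_Bset_add_le:
  fixes sc :: "'k::field \<Rightarrow> 'r::ring \<Rightarrow> 'r"
  assumes "is_K_algebra sc" and "no_zero_divisors_ring TYPE('r)" and "s \<noteq> 0"
    and "inj e" and "\<not> module.dependent sc (range e)"
    and U: "module.span sc (e ` {..<d'}) = U" and W: "module.span sc (e ` {..<d}) = W"
    and "U \<subseteq> W" and mult: "\<forall>x\<in>U. x * s \<in> W"
  shows "card (Bset e W s) + d' \<le> d"
proof -
  interpret vector_space sc
    using \<open>is_K_algebra sc\<close> unfolding is_K_algebra_def by blast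
  define A where "A = e ` {..<d'} \<union> Bset e W s"
  have eU: "e ` {..<d'} \<subseteq> U"
    using span_superset[of "e ` {..<d'}"] unfolding U .
  then have eW: "e ` {..<d'} \<subseteq> W"
    using \<open>U \<subseteq> W\<close> by (rule subset_trans)
  have "A \<subseteq> range e"
    unfolding A_def Bset_def by blast
  then have "independent A"
    using independent_mono assms(5) by blast
  moreover have "(\<lambda>x. x * s) ` A \<subseteq> span (e ` {..<d})"
  proof -
    have "x * s \<in> W" if "x \<in> A" for x
      using that mult eU unfolding A_def Bset_def by blast
    then show ?thesis
      unfolding W by blast
  qed
  ultimately have "finite A \<and> card A \<le> card (e ` {..<d})"
    by (intro injective_linear_image_span_bound[OF K_algebra_linear_mult_right[OF assms(1)]
          inj_mult_right_no_zero_divisors[OF assms(2,3)]]) simp_all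
  moreover have "e ` {..<d'} \<inter> Bset e W s = {}"
    using eW unfolding Bset_def by blast
  ultimately have "card (e ` {..<d'}) + card (Bset e W s) \<le> card (e ` {..<d})"
    unfolding A_def using card_Un_disjoint[of "e ` {..<d'}" "Bset e W s"] by simp
  then show ?thesis
    using \<open>inj e\<close> by (simp add: card_image inj_on_subset)
qed

theorem lemma4:
  fixes sc :: "'k::field \<Rightarrow> 'r::ring \<Rightarrow> 'r"
    and Vb V :: "nat \<Rightarrow> 'r set"
    and e :: "nat \<Rightarrow> 'r"
    and s :: 'r
  assumes alg: "affine_algebra sc"
    and nzd: "no_zero_divisors_ring TYPE('r)"
    and fd: "\<And>n. fin_dim_subspace sc (Vb n) \<and> fin_dim_subspace sc (V n)"
    and chain: "\<And>n. Vb n \<subseteq> V n \<and> V n \<subseteq> Vb (Suc n)"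
    and cond_a: "\<And>r. (\<lambda>n. real (vector_space.dim sc (sub_sum sc (sub_prod sc (V n) {r}) (V n)))
                          / real (vector_space.dim sc (V n))) \<longlonglongrightarrow> 1"
    and cond_b: "(\<lambda>n. real (vector_space.dim sc (Vb n)) / real (vector_space.dim sc (V n))) \<longlonglongrightarrow> 1"
    and cond_c: "\<And>Z. fin_dim_subspace sc Z \<Longrightarrow>
                   \<exists>k. \<forall>n>k. sub_sum sc (Vb n) (sub_prod sc (Vb n) Z) \<subseteq> V n"
    and e_inj: "inj e"
    and e_indep: "\<not> module.dependent sc (range e)"
    and e_span: "module.span sc (range e) = UNIV"
    and e_Vb: "\<And>i. module.span sc (e ` {..<vector_space.dim sc (Vb i)}) = Vb i"
    and e_V: "\<And>i. module.span sc (e ` {..<vector_space.dim sc (V i)}) = V i"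
    and s_nz: "s \<noteq> 0"
  shows "(\<lambda>k. real (card (Fset e (V k) s)) / real (vector_space.dim sc (V k))) \<longlonglongrightarrow> 0
       \<and> (\<lambda>k. real (card (Bset e (V k) s)) / real (vector_space.dim sc (V k))) \<longlonglongrightarrow> 0"
proof -
  have K_alg: "is_K_algebra sc"
    using alg unfolding affine_algebra_def by blast
  then have vs: "vector_space sc"
    unfolding is_K_algebra_def by blast
  have mult: "\<forall>\<^sub>F k in sequentially. \<forall>x\<in>Vb k. x * s \<in> V k"
    using eventually_mult_right_mem[OF vs cond_c] .
  have "\<forall>\<^sub>F k in sequentially.
      card (Fset e (V k) s) + vector_space.dim sc (Vb k) \<le> vector_space.dim sc (V k)"
    using mult by eventually_elim
      (rule card_Fset_add_le[OF vs e_inj e_indep e_Vb e_V conjunct1[OF chain]])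
  moreover have "\<forall>\<^sub>F k in sequentially.
      card (Bset e (V k) s) + vector_space.dim sc (Vb k) \<le> vector_space.dim sc (V k)"
    using mult by eventually_elim
      (rule card_Bset_add_le[OF K_alg nzd s_nz e_inj e_indep e_Vb e_V conjunct1[OF chain]])
  ultimately show ?thesis
    by (intro conjI ratio_tendsto_zero_of_bounded_by_gap[OF cond_b])
qed

end
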